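(* Let $\mathbb{T}$ be a time scale, $T>0$ with $0,T\in\mathbb{T}$, $J=[0,T]_{\mathbb{T}}$, $0<t_1<\dots<t_p<T$ right-dense points of $J$, $\lambda\in\mathbb{R}$, $h\in L^2_\Delta([0,T)_{\mathbb{T}})$ and $d_1,\dots,d_p\in\mathbb{R}$. Define $\varphi:H^1_{0,\Delta}(J)\to\mathbb{R}$ by $$\varphi(v)=\frac12\int_0^T (v^\Delta)^2\Delta t+\frac{\lambda}{2}\int_0^T (v^\sigma)^2\Delta t-\int_0^T h v^\sigma\Delta t+\sum_{j=1}^p d_j v(t_j).$$ Then: (1) $\varphi$ is differentiable at every $u\in H^1_{0,\Delta}(J)$ and for all $v\in H^1_{0,\Delta}(J)$, $$(\varphi'(u),v)=\int_0^T u^\Delta v^\Delta\Delta t+\lambda\int_0^T u^\sigma v^\sigma\Delta t-\int_0^T h v^\sigma\Delta t+\sum_{j=1}^p d_j v(t_j);$$ (2) if $u\in H^1_{0,\Delta}(J)$ is a critical point of $\varphi$, then $u$ is a weak solution of $$-u^{\Delta\Delta}(t)+\lambda u^\sigma(t)=h(t)\ \ \Delta\text{-a.e. } t\in J^{\kappa^2},\quad u^\Delta(t_j^+)-u^\Delta(t_j^-)=d_j,\ j=1,\dots,p,\quad u(0)=u(T)=0.$$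
   Context: $\sigma$ is the forward jump operator and $v^\sigma=v\circ\sigma$; $v^\Delta$ is the delta derivative; $J^{\kappa}$, $J^{\kappa^2}$ denote $J$ with a left-scattered maximum removed once, resp. twice. $H^1_{0,\Delta}(J)$ is the closure in $W^{1,2}_\Delta(J)$ of the continuous functions on $J$ that are delta differentiable on $J^\kappa$ with rd-continuous derivative and vanish at $0,T$, with inner product $(u,v)=\int_0^T u^\Delta v^\Delta\Delta t$. A weak solution of the linear problem is $u\in H^1_{0,\Delta}(J)$ such that $\int_0^T u^\Delta v^\Delta\Delta t+\lambda\int_0^T u^\sigma v^\sigma\Delta t=\int_0^T h v^\sigma\Delta t-\sum_{j=1}^p d_j v(t_j)$ for every $v\in H^1_{0,\Delta}(J)$. *)

theory Defs
  imports "HOL-Analysis.Analysis"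
begin

definition time_scale :: "real set \<Rightarrow> bool" where
  "time_scale TS \<longleftrightarrow> closed TS \<and> TS \<noteq> {}"

definition sigma_ts :: "real set \<Rightarrow> real \<Rightarrow> real" where
  "sigma_ts TS t = (if \<exists>s\<in>TS. s > t then Inf {s\<in>TS. s > t} else t)"

definition right_dense :: "real set \<Rightarrow> real \<Rightarrow> bool" where
  "right_dense TS t \<longleftrightarrow> t \<in> TS \<and> sigma_ts TS t = t"

definition ts_floor :: "real set \<Rightarrow> real \<Rightarrow> real" where
  "ts_floor TS s = Sup {t\<in>TS. t \<le> s}"

text \<open>Lebesgue Delta-measure on [a,b) of the time scale (a, b in TS): the completion of
  the image of Lebesgue measure on [a,b) under ts_floor; it gives the interval [c,d) of the
  time scale (c,d in TS) the mass d - c, i.e. it is the Caratheodory extension of the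
  Delta-premeasure.\<close>
definition delta_measure :: "real set \<Rightarrow> real \<Rightarrow> real \<Rightarrow> real measure" where
  "delta_measure TS a b = completion (distr (restrict_space lborel {a..<b}) borel (ts_floor TS))"

definition delta_int :: "real set \<Rightarrow> real \<Rightarrow> real \<Rightarrow> (real \<Rightarrow> real) \<Rightarrow> real" where
  "delta_int TS a b f = integral\<^sup>L (delta_measure TS a b) f"

definition L2_delta :: "real set \<Rightarrow> real \<Rightarrow> real \<Rightarrow> (real \<Rightarrow> real) \<Rightarrow> bool" where
  "L2_delta TS a b f \<longleftrightarrow> f \<in> borel_measurable (delta_measure TS a b)
      \<and> integrable (delta_measure TS a b) (\<lambda>t. (f t)\<^sup>2)"

definition is_delta_deriv :: "real set \<Rightarrow> real \<Rightarrow> (real \<Rightarrow> real) \<Rightarrow> (real \<Rightarrow> real) \<Rightarrow> bool" where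
  "is_delta_deriv TS T u g \<longleftrightarrow> L2_delta TS 0 T g \<and>
      (\<forall>t\<in>TS \<inter> {0..T}. u t = u 0 + delta_int TS 0 t g)"

text \<open>H^1_{0,Delta}(J), via the absolutely continuous representatives.\<close>
definition H10 :: "real set \<Rightarrow> real \<Rightarrow> (real \<Rightarrow> real) set" where
  "H10 TS T = {u. (\<exists>g. is_delta_deriv TS T u g) \<and> u 0 = 0 \<and> u T = 0}"

definition dderiv :: "real set \<Rightarrow> real \<Rightarrow> (real \<Rightarrow> real) \<Rightarrow> (real \<Rightarrow> real)" where
  "dderiv TS T u = (SOME g. is_delta_deriv TS T u g)"

definition H_norm :: "real set \<Rightarrow> real \<Rightarrow> (real \<Rightarrow> real) \<Rightarrow> real" where
  "H_norm TS T u = sqrt (delta_int TS 0 T (\<lambda>t. (dderiv TS T u t)\<^sup>2))"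

definition frechet_diff_at ::
  "(real \<Rightarrow> real) set \<Rightarrow> ((real \<Rightarrow> real) \<Rightarrow> real) \<Rightarrow> ((real \<Rightarrow> real) \<Rightarrow> real)
     \<Rightarrow> (real \<Rightarrow> real) \<Rightarrow> ((real \<Rightarrow> real) \<Rightarrow> real) \<Rightarrow> bool" where
  "frechet_diff_at H nrm F u L \<longleftrightarrow>
     (\<forall>v\<in>H. \<forall>w\<in>H. \<forall>a b. L (\<lambda>t. a * v t + b * w t) = a * L v + b * L w) \<and>
     (\<exists>C. \<forall>v\<in>H. \<bar>L v\<bar> \<le> C * nrm v) \<and>
     (\<forall>\<epsilon>>0. \<exists>\<delta>>0. \<forall>v\<in>H. nrm (\<lambda>t. v t - u t) < \<delta> \<longrightarrow>
        \<bar>F v - F u - L (\<lambda>t. v t - u t)\<bar> \<le> \<epsilon> * nrm (\<lambda>t. v t - u t))"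

definition critical_point ::
  "(real \<Rightarrow> real) set \<Rightarrow> ((real \<Rightarrow> real) \<Rightarrow> real) \<Rightarrow> ((real \<Rightarrow> real) \<Rightarrow> real)
     \<Rightarrow> (real \<Rightarrow> real) \<Rightarrow> bool" where
  "critical_point H nrm F u \<longleftrightarrow> u \<in> H \<and> (\<exists>L. frechet_diff_at H nrm F u L \<and> (\<forall>v\<in>H. L v = 0))"

definition weak_solution ::
  "real set \<Rightarrow> real \<Rightarrow> real \<Rightarrow> (real \<Rightarrow> real) \<Rightarrow> nat \<Rightarrow> (nat \<Rightarrow> real) \<Rightarrow> (nat \<Rightarrow> real)
     \<Rightarrow> (real \<Rightarrow> real) \<Rightarrow> bool" where
  "weak_solution TS T lam h p tt d u \<longleftrightarrow> u \<in> H10 TS T \<and>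
     (\<forall>v\<in>H10 TS T.
        delta_int TS 0 T (\<lambda>t. dderiv TS T u t * dderiv TS T v t)
        + lam * delta_int TS 0 T (\<lambda>t. u (sigma_ts TS t) * v (sigma_ts TS t))
        = delta_int TS 0 T (\<lambda>t. h t * v (sigma_ts TS t)) - (\<Sum>j=1..p. d j * v (tt j)))"

end

theory Submission
  imports Defs
begin

text \<open>
  On \<open>[0,T)\<close> the Lebesgue \<open>\<Delta>\<close>-measure is the completion of the image of Lebesgue measure
  under the floor map \<open>s \<mapsto> max {t \<in> \<T>. t \<le> s}\<close>, so \<open>\<Delta>\<close>-integrals are ordinary Lebesgue
  integrals of functions composed with the floor map. An element of \<open>H\<^sup>1\<^sub>0\<close> is the primitive
  \<open>u c = \<integral>\<^sub>0\<^sup>c u\<^sup>\<Delta>\<close>; by Cauchy--Schwarz \<open>\<bar>u c\<bar> \<le> \<surd>T \<parallel>u\<parallel>\<close>, and \<open>u\<^sup>\<Delta>\<close> is determined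
  \<open>\<Delta>\<close>-a.e.\ by \<open>u\<close>, because the initial segments \<open>[0,c)\<close>, \<open>c \<in> \<T>\<close>, determine a finite measure.
  Hence \<open>u \<mapsto> u\<^sup>\<Delta>\<close> is linear, \<open>\<phi>'(u)\<close> is a bounded linear form, and the remainder
  \<open>\<phi>(u+w) - \<phi>(u) - \<phi>'(u) w = \<parallel>w\<parallel>\<^sup>2/2 + \<lambda>/2 \<integral>(w\<^sup>\<sigma>)\<^sup>2\<close> is \<open>O(\<parallel>w\<parallel>\<^sup>2)\<close>.
  Frechet derivatives are unique along rays, so at a critical point \<open>\<phi>'(u) = 0\<close>,
  which is the weak formulation of the impulsive problem.
\<close>

lemma integrable_mult_of_square_integrable:
  fixes f g :: "'a \<Rightarrow> real"
  assumes [measurable]: "f \<in> borel_measurable M" "g \<in> borel_measurable M"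
    and "integrable M (\<lambda>x. (f x)\<^sup>2)" "integrable M (\<lambda>x. (g x)\<^sup>2)"
  shows "integrable M (\<lambda>x. f x * g x)"
proof (rule Bochner_Integration.integrable_bound[of _ "\<lambda>x. (f x)\<^sup>2 + (g x)\<^sup>2"])
  show "AE x in M. norm (f x * g x) \<le> norm ((f x)\<^sup>2 + (g x)\<^sup>2)"
  proof (intro AE_I2)
    fix x
    have "2 * \<bar>f x\<bar> * \<bar>g x\<bar> \<le> \<bar>f x\<bar>\<^sup>2 + \<bar>g x\<bar>\<^sup>2" by (rule sum_squares_bound)
    moreover have "0 \<le> \<bar>f x\<bar> * \<bar>g x\<bar>" by simp
    ultimately have "\<bar>f x\<bar> * \<bar>g x\<bar> \<le> (f x)\<^sup>2 + (g x)\<^sup>2" unfolding power2_abs by linarith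
    then show "norm (f x * g x) \<le> norm ((f x)\<^sup>2 + (g x)\<^sup>2)" by (simp add: abs_mult)
  qed
qed (use assms in auto)

lemma Cauchy_Schwarz_integral:
  fixes f g :: "'a \<Rightarrow> real"
  assumes [measurable]: "f \<in> borel_measurable M" "g \<in> borel_measurable M"
    and f2: "integrable M (\<lambda>x. (f x)\<^sup>2)" and g2: "integrable M (\<lambda>x. (g x)\<^sup>2)"
  shows "\<bar>\<integral>x. f x * g x \<partial>M\<bar> \<le> sqrt (\<integral>x. (f x)\<^sup>2 \<partial>M) * sqrt (\<integral>x. (g x)\<^sup>2 \<partial>M)"
proof -
  have fg: "integrable M (\<lambda>x. \<bar>f x\<bar> * \<bar>g x\<bar>)"
    using integrable_mult_of_square_integrable[of "\<lambda>x. \<bar>f x\<bar>" M "\<lambda>x. \<bar>g x\<bar>"] f2 g2 by simp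
  have nn: "(\<integral>\<^sup>+x. ennreal (k x) \<partial>M) = ennreal (\<integral>x. k x \<partial>M)"
    if "integrable M k" "\<And>x. 0 \<le> k x" for k :: "'a \<Rightarrow> real"
    using that by (intro nn_integral_eq_integral) auto
  have "(\<integral>\<^sup>+x. ennreal \<bar>f x\<bar> * ennreal \<bar>g x\<bar> \<partial>M)\<^sup>2
      \<le> (\<integral>\<^sup>+x. ennreal \<bar>f x\<bar> ^ 2 \<partial>M) * (\<integral>\<^sup>+x. ennreal \<bar>g x\<bar> ^ 2 \<partial>M)"
    by (rule Cauchy_Schwarz_nn_integral) auto
  also have "\<dots> = ennreal (\<integral>x. (f x)\<^sup>2 \<partial>M) * ennreal (\<integral>x. (g x)\<^sup>2 \<partial>M)"
    using nn[OF f2] nn[OF g2] by (simp add: ennreal_power)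
  finally have "ennreal ((\<integral>x. \<bar>f x\<bar> * \<bar>g x\<bar> \<partial>M)\<^sup>2)
      \<le> ennreal ((\<integral>x. (f x)\<^sup>2 \<partial>M) * (\<integral>x. (g x)\<^sup>2 \<partial>M))"
    using nn[OF fg] by (simp add: ennreal_mult ennreal_power ennreal_mult'' integral_nonneg_AE)
  then have "(\<integral>x. \<bar>f x\<bar> * \<bar>g x\<bar> \<partial>M)\<^sup>2 \<le> (\<integral>x. (f x)\<^sup>2 \<partial>M) * (\<integral>x. (g x)\<^sup>2 \<partial>M)"
    by (simp add: ennreal_le_iff integral_nonneg_AE)
  then have "(\<integral>x. \<bar>f x\<bar> * \<bar>g x\<bar> \<partial>M) \<le> sqrt (\<integral>x. (f x)\<^sup>2 \<partial>M) * sqrt (\<integral>x. (g x)\<^sup>2 \<partial>M)"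
    by (metis real_le_rsqrt real_sqrt_mult)
  moreover have "\<bar>\<integral>x. f x * g x \<partial>M\<bar> \<le> (\<integral>x. \<bar>f x\<bar> * \<bar>g x\<bar> \<partial>M)"
    using integral_abs_bound[of M "\<lambda>x. f x * g x"] by (simp add: abs_mult)
  ultimately show ?thesis by linarith
qed

lemma borel_measurable_completion_AE_eq:
  fixes f G :: "'a \<Rightarrow> real"
  assumes G: "G \<in> borel_measurable M" and ae: "AE x in M. f x = G x"
  shows "f \<in> borel_measurable (completion M)"
proof (rule measurableI)
  fix A :: "real set" assume A: "A \<in> sets borel"
  have s: "G -` A \<inter> space M \<in> sets (completion M)" using measurable_sets[OF G A] by auto
  have "AE x in completion M. x \<in> G -` A \<inter> space M \<longleftrightarrow> x \<in> f -` A \<inter> space (completion M)"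
    using AE_completion[OF ae] by eventually_elim auto
  then show "f -` A \<inter> space (completion M) \<in> sets (completion M)"
    by (rule completion.in_sets_AE[OF _ s]) auto
qed auto

text \<open>Compare the two remainder estimates at \<open>u + s v\<close> for small \<open>s > 0\<close>.\<close>
lemma frechet_diff_at_unique:
  assumes L: "frechet_diff_at H nrm F u L" and L': "frechet_diff_at H nrm F u L'"
    and ray: "\<And>v s. v \<in> H \<Longrightarrow> (\<lambda>t. u t + s * v t) \<in> H"
    and nrm_scale: "\<And>v s. v \<in> H \<Longrightarrow> nrm (\<lambda>t. s * v t) = \<bar>s\<bar> * nrm v"
    and nrm_nonneg: "\<And>v. v \<in> H \<Longrightarrow> 0 \<le> nrm v"
    and v: "v \<in> H"
  shows "L v = L' v"
proof (cases "nrm v = 0")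
  case True
  obtain C C' where "\<bar>L v\<bar> \<le> C * nrm v" "\<bar>L' v\<bar> \<le> C' * nrm v"
    using L L' v unfolding frechet_diff_at_def by blast
  then show ?thesis using True by simp
next
  case False
  then have nv: "0 < nrm v" using nrm_nonneg[OF v] by simp
  have homog: "K (\<lambda>t. s * v t) = s * K v" if "frechet_diff_at H nrm F u K" for K s
  proof -
    have "K (\<lambda>t. s * v t + 0 * v t) = s * K v + 0 * K v"
      using that v unfolding frechet_diff_at_def by blast
    then show ?thesis by simp
  qed
  have "\<bar>L v - L' v\<bar> / (2 * nrm v) \<le> 0 + e" if e: "0 < e" for e
  proof -
    obtain \<delta> where \<delta>: "0 < \<delta>" "\<forall>w\<in>H. nrm (\<lambda>t. w t - u t) < \<delta> \<longrightarrow>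
        \<bar>F w - F u - L (\<lambda>t. w t - u t)\<bar> \<le> e * nrm (\<lambda>t. w t - u t)"
      using L e unfolding frechet_diff_at_def by blast
    obtain \<delta>' where \<delta>': "0 < \<delta>'" "\<forall>w\<in>H. nrm (\<lambda>t. w t - u t) < \<delta>' \<longrightarrow>
        \<bar>F w - F u - L' (\<lambda>t. w t - u t)\<bar> \<le> e * nrm (\<lambda>t. w t - u t)"
      using L' e unfolding frechet_diff_at_def by blast
    define s where "s = min \<delta> \<delta>' / (2 * nrm v)"
    have s: "0 < s" "s * nrm v < \<delta>" "s * nrm v < \<delta>'"
      using \<delta> \<delta>' nv by (auto simp: s_def)
    define z where "z = (\<lambda>t. u t + s * v t)"
    have z: "z \<in> H" unfolding z_def by (rule ray[OF v])
    have dz: "(\<lambda>t. z t - u t) = (\<lambda>t. s * v t)" and nz: "nrm (\<lambda>t. s * v t) = s * nrm v"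
      using nrm_scale[OF v, of s] s by (auto simp: z_def)
    have "nrm (\<lambda>t. z t - u t) < \<delta>" "nrm (\<lambda>t. z t - u t) < \<delta>'"
      unfolding dz nz by (fact s(2), fact s(3))
    then have "\<bar>F z - F u - L (\<lambda>t. z t - u t)\<bar> \<le> e * nrm (\<lambda>t. z t - u t)"
        "\<bar>F z - F u - L' (\<lambda>t. z t - u t)\<bar> \<le> e * nrm (\<lambda>t. z t - u t)"
      using \<delta>(2) \<delta>'(2) z by blast+
    then have b: "\<bar>F z - F u - s * L v\<bar> \<le> e * (s * nrm v)" "\<bar>F z - F u - s * L' v\<bar> \<le> e * (s * nrm v)"
      unfolding dz nz homog[OF L] homog[OF L'] .
    have "s * \<bar>L v - L' v\<bar> = \<bar>(F z - F u - s * L' v) - (F z - F u - s * L v)\<bar>"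
      using s by (simp add: abs_mult right_diff_distrib[symmetric])
    also have "\<dots> \<le> \<bar>F z - F u - s * L' v\<bar> + \<bar>F z - F u - s * L v\<bar>" by (rule abs_triangle_ineq4)
    also have "\<dots> \<le> s * (2 * e * nrm v)" using b by (simp add: algebra_simps)
    finally have "s * \<bar>L v - L' v\<bar> \<le> s * (2 * e * nrm v)" .
    then show ?thesis using s nv by (simp add: divide_le_eq mult_ac)
  qed
  then have "\<bar>L v - L' v\<bar> / (2 * nrm v) \<le> 0" by (rule field_le_epsilon)
  then show ?thesis using nv by (simp add: divide_le_0_iff)
qed

lemma AE_zero_if_ray_integrals_vanish:
  fixes M :: "real measure" and G :: "real \<Rightarrow> real"
  assumes "finite_measure M" and sets_M: "sets M = sets borel" and G: "integrable M G"
    and rays: "\<And>x. (\<integral>y. indicator {x<..} y * G y \<partial>M) = 0"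
  shows "AE y in M. G y = 0"
proof -
  interpret finite_measure M by fact
  have Gm[measurable]: "G \<in> borel_measurable M" using G by simp
  have fin: "(\<integral>\<^sup>+y. ennreal (f y) \<partial>M) \<noteq> \<infinity>" if "integrable M f" for f :: "real \<Rightarrow> real"
  proof -
    have "(\<integral>\<^sup>+y. ennreal (f y) \<partial>M) \<le> (\<integral>\<^sup>+y. ennreal (norm (f y)) \<partial>M)"
      by (intro nn_integral_mono) (auto intro: ennreal_leI)
    also have "\<dots> < \<infinity>" using that by (simp add: integrable_iff_bounded)
    finally show ?thesis by simp
  qed
  have "density M (\<lambda>y. ennreal (G y)) = density M (\<lambda>y. ennreal (- G y))"
  proof (rule measure_eqI_lessThan)
    fix x :: real
    let ?f = "\<lambda>y. indicator {x<..} y * G y"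
    have ix: "integrable M ?f"
      using integrable_mult_indicator[of "{x<..}" M G] G sets_M by simp
    have e1: "emeasure (density M (\<lambda>y. ennreal (G y))) {x<..} = (\<integral>\<^sup>+y. ennreal (?f y) \<partial>M)"
      using sets_M by (subst emeasure_density) (auto intro!: nn_integral_cong simp: indicator_def)
    have e2: "emeasure (density M (\<lambda>y. ennreal (- G y))) {x<..} = (\<integral>\<^sup>+y. ennreal (- ?f y) \<partial>M)"
      using sets_M by (subst emeasure_density) (auto intro!: nn_integral_cong simp: indicator_def)
    have f1: "(\<integral>\<^sup>+y. ennreal (?f y) \<partial>M) \<noteq> \<infinity>" using fin[OF ix] .
    have f2: "(\<integral>\<^sup>+y. ennreal (- ?f y) \<partial>M) \<noteq> \<infinity>" using fin[of "\<lambda>y. - ?f y"] ix by simp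
    have "enn2real (\<integral>\<^sup>+y. ennreal (?f y) \<partial>M) = enn2real (\<integral>\<^sup>+y. ennreal (- ?f y) \<partial>M)"
      using real_lebesgue_integral_def[OF ix] rays[of x] by simp
    then have "(\<integral>\<^sup>+y. ennreal (?f y) \<partial>M) = (\<integral>\<^sup>+y. ennreal (- ?f y) \<partial>M)"
      using f1 f2 by (metis ennreal_enn2real_if infinity_ennreal_def)
    then show "emeasure (density M (\<lambda>y. ennreal (G y))) {x<..} = emeasure (density M (\<lambda>y. ennreal (- G y))) {x<..}"
      using e1 e2 by simp
    show "emeasure (density M (\<lambda>y. ennreal (G y))) {x<..} < \<infinity>"
      using e1 f1 by (simp add: less_top)
  qed (use sets_M in auto)
  then have "AE y in M. ennreal (G y) = ennreal (- G y)"
    by (subst (asm) density_unique_iff) auto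
  then show ?thesis
  proof eventually_elim
    case (elim y) then show ?case
      by (cases "G y \<le> 0") (auto simp: ennreal_neg)
  qed
qed

lemma delta_int_square_nonneg: "0 \<le> delta_int TS a b (\<lambda>t. (f t)\<^sup>2)"
  unfolding delta_int_def by (rule integral_nonneg_AE) simp

locale delta_interval =
  fixes TS :: "real set" and T :: real
  assumes closed_TS: "closed TS" and T_pos: "0 < T" and zero_in_TS: "0 \<in> TS" and T_in_TS: "T \<in> TS"
begin

abbreviation flr :: "real \<Rightarrow> real" where "flr \<equiv> ts_floor TS"
abbreviation \<sigma> :: "real \<Rightarrow> real" where "\<sigma> \<equiv> sigma_ts TS"
abbreviation \<mu> :: "real measure" where "\<mu> \<equiv> delta_measure TS 0 T"
abbreviation nrm :: "(real \<Rightarrow> real) \<Rightarrow> real" where "nrm \<equiv> H_norm TS T"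

subsection \<open>The floor map and the forward jump\<close>

lemma
  assumes "0 \<le> s"
  shows ts_floor_in_TS: "flr s \<in> TS" and ts_floor_le: "flr s \<le> s" and ts_floor_nonneg: "0 \<le> flr s"
    and ts_floor_greatest: "\<And>t. t \<in> TS \<Longrightarrow> t \<le> s \<Longrightarrow> t \<le> flr s"
proof -
  let ?S = "{t\<in>TS. t \<le> s}"
  have ne: "?S \<noteq> {}" using zero_in_TS assms by auto
  have bd: "bdd_above ?S" by (auto intro: bdd_aboveI[of _ s])
  have cl: "closed ?S" using closed_TS by (simp add: closed_Collect_conj closed_Collect_le)
  have "Sup ?S \<in> ?S" using closed_contains_Sup[OF ne bd cl] .
  then show "flr s \<in> TS" "flr s \<le> s" by (auto simp: ts_floor_def)
  show "\<And>t. t \<in> TS \<Longrightarrow> t \<le> s \<Longrightarrow> t \<le> flr s"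
    unfolding ts_floor_def using bd by (auto intro: cSup_upper)
  then show "0 \<le> flr s" using zero_in_TS assms by auto
qed

lemma mono_on_ts_floor: "mono_on {0..} flr"
  by (rule mono_onI) (metis atLeast_iff order_trans ts_floor_in_TS ts_floor_le ts_floor_greatest)

lemma ts_floor_measurable: "flr \<in> restrict_space lborel {0..<c} \<rightarrow>\<^sub>M borel"
proof -
  have "flr \<in> borel_measurable (restrict_space borel {0..<c})"
    by (rule borel_measurable_mono_on_fnc) (rule mono_on_subset[OF mono_on_ts_floor], auto)
  moreover have "sets (restrict_space lborel {0..<c}) = sets (restrict_space borel {0..<c})"
    by (rule sets_restrict_space_cong) simp
  ultimately show ?thesis using measurable_cong_sets by blast
qed

lemma
  assumes "t < T"
  shows sigma_in_TS: "\<sigma> t \<in> TS" and sigma_ge: "t \<le> \<sigma> t" and sigma_le_T: "\<sigma> t \<le> T"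
proof -
  let ?S = "{s\<in>TS. s > t}"
  have ex: "\<exists>s\<in>TS. s > t" using T_in_TS assms by auto
  have ne: "?S \<noteq> {}" using ex by auto
  have bd: "bdd_below ?S" by (auto intro: bdd_belowI[of _ t])
  have "Inf ?S \<in> closure ?S" by (rule closure_contains_Inf[OF ne bd])
  also have "closure ?S \<subseteq> closure TS" by (rule closure_mono) auto
  finally show "\<sigma> t \<in> TS" using ex closed_TS by (simp add: sigma_ts_def closure_closed)
  show "t \<le> \<sigma> t" using ex ne by (auto simp: sigma_ts_def intro!: cInf_greatest)
  show "\<sigma> t \<le> T" using ex bd T_in_TS assms by (auto simp: sigma_ts_def intro!: cInf_lower)
qed

lemma mono_sigma: "mono \<sigma>"
proof (rule monoI)
  fix x y :: real assume "x \<le> y"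
  show "\<sigma> x \<le> \<sigma> y"
  proof (cases "\<exists>s\<in>TS. s > y")
    case True
    then have ex: "\<exists>s\<in>TS. s > x" using \<open>x \<le> y\<close> by force
    have "Inf {s\<in>TS. s > x} \<le> Inf {s\<in>TS. s > y}"
      using True \<open>x \<le> y\<close> by (intro cInf_superset_mono) (auto intro: bdd_belowI[of _ x])
    then show ?thesis using True ex by (simp add: sigma_ts_def)
  next
    case False
    show ?thesis
    proof (cases "\<exists>s\<in>TS. s > x")
      case True
      then obtain s where s: "s \<in> TS" "s > x" by auto
      have "Inf {s\<in>TS. s > x} \<le> s" using s by (intro cInf_lower) (auto intro: bdd_belowI[of _ x])
      also have "s \<le> y" using False s by force
      finally show ?thesis using True False by (simp add: sigma_ts_def)
    qed (use False \<open>x \<le> y\<close> in \<open>simp add: sigma_ts_def\<close>)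
  qed
qed

lemma borel_measurable_sigma: "\<sigma> \<in> borel_measurable borel"
  by (rule borel_measurable_mono[OF mono_sigma])

lemma less_ts_floor_iff:
  assumes "x < T" "0 \<le> s" "s \<noteq> \<sigma> x"
  shows "x < flr s \<longleftrightarrow> \<sigma> x \<le> s"
proof -
  let ?S = "{t\<in>TS. t > x}"
  have ex: "\<exists>t\<in>TS. t > x" using T_in_TS assms by auto
  have sg: "\<sigma> x = Inf ?S" using ex by (simp add: sigma_ts_def)
  have bd: "bdd_below ?S" by (auto intro: bdd_belowI[of _ x])
  show ?thesis
  proof
    assume "x < flr s"
    then have "flr s \<in> ?S" using ts_floor_in_TS[OF assms(2)] by auto
    then have "\<sigma> x \<le> flr s" unfolding sg using bd by (rule cInf_lower)
    then show "\<sigma> x \<le> s" using ts_floor_le[OF assms(2)] by linarith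
  next
    assume "\<sigma> x \<le> s"
    then have "Inf ?S < s" using assms(3) sg by auto
    then obtain t where t: "t \<in> ?S" "t < s" using cInf_less_iff[OF _ bd] ex by auto
    then have "t \<le> flr s" using ts_floor_greatest[OF assms(2)] by auto
    then show "x < flr s" using t by auto
  qed
qed

subsection \<open>The \<open>\<Delta>\<close>-measure as an image of Lebesgue measure\<close>

definition delta_borel :: "real \<Rightarrow> real measure" where
  "delta_borel c = distr (restrict_space lborel {0..<c}) borel flr"

lemma delta_measure_eq_completion: "delta_measure TS 0 c = completion (delta_borel c)"
  by (simp add: delta_measure_def delta_borel_def)

lemma sets_delta_borel[simp]: "sets (delta_borel c) = sets borel"
  and space_delta_borel[simp]: "space (delta_borel c) = UNIV"
  by (simp_all add: delta_borel_def)

lemma measurable_delta_borel_iff[simp]: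
  "f \<in> borel_measurable (delta_borel c) \<longleftrightarrow> f \<in> borel_measurable borel"
  by (simp only: measurable_cong_sets[OF sets_delta_borel refl])

lemma emeasure_delta_borel:
  "A \<in> sets borel \<Longrightarrow> emeasure (delta_borel c) A = emeasure lborel (flr -` A \<inter> {0..<c})"
  unfolding delta_borel_def
  by (subst emeasure_distr[OF ts_floor_measurable], simp, subst emeasure_restrict_space) auto

lemma finite_measure_delta_borel: "finite_measure (delta_borel c)"
proof (rule finite_measureI)
  have "emeasure (delta_borel c) (space (delta_borel c)) = emeasure lborel {0..<c}"
    by (simp add: emeasure_delta_borel)
  then show "emeasure (delta_borel c) (space (delta_borel c)) \<noteq> \<infinity>" by (cases "0 \<le> c") auto
qed

lemma AE_delta_borel_mono:
  assumes "c \<le> c'" and "AE x in delta_borel c'. P x"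
  shows "AE x in delta_borel c. P x"
proof -
  obtain B where B: "B \<in> null_sets (delta_borel c')" "{x. \<not> P x} \<subseteq> B"
    using assms(2) unfolding eventually_ae_filter by auto
  have Bs: "B \<in> sets borel" using B(1) by (auto simp: null_sets_def)
  have "emeasure (delta_borel c) B \<le> emeasure lborel (flr -` B \<inter> {0..<c'})"
    unfolding emeasure_delta_borel[OF Bs]
  proof (rule emeasure_mono)
    show "flr -` B \<inter> {0..<c'} \<in> sets lborel"
      using measurable_sets[OF ts_floor_measurable[of c'] Bs] by (simp add: sets_restrict_space_iff)
  qed (use assms(1) in auto)
  also have "\<dots> = 0" using B(1) Bs by (simp add: emeasure_delta_borel null_sets_def)
  finally have "B \<in> null_sets (delta_borel c)" using Bs by (auto simp: null_sets_def)
  then show ?thesis using B(2) unfolding eventually_ae_filter by auto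
qed

lemma AE_delta_borel_in_TS:
  assumes "c \<le> T" shows "AE x in delta_borel c. x \<in> TS \<and> 0 \<le> x \<and> x < T"
proof -
  have "{x \<in> space borel. x \<in> TS \<and> 0 \<le> x \<and> x < T} = TS \<inter> {0..<T}" by auto
  then have m: "{x \<in> space borel. x \<in> TS \<and> 0 \<le> x \<and> x < T} \<in> sets borel"
    using borel_closed[OF closed_TS] by simp
  have "flr s \<in> TS \<and> 0 \<le> flr s \<and> flr s < T" if "s \<in> {0..<c}" for s
    using that assms ts_floor_in_TS[of s] ts_floor_le[of s] ts_floor_nonneg[of s] by auto
  then show ?thesis unfolding delta_borel_def
    by (subst AE_distr_iff[OF ts_floor_measurable m], subst AE_restrict_space_iff) auto
qed

lemma borel_measurable_indicator_ts_floor: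
  fixes G :: "real \<Rightarrow> real"
  assumes "G \<in> borel_measurable borel"
  shows "(\<lambda>s. indicator {0..<c} s * G (flr s)) \<in> borel_measurable lborel"
proof -
  have "(\<lambda>s. G (flr s)) \<in> borel_measurable (restrict_space lborel {0..<c})"
    using measurable_compose[OF ts_floor_measurable assms] .
  then have "(\<lambda>s. indicator {0..<c} s *\<^sub>R G (flr s)) \<in> borel_measurable lborel"
    by (subst (asm) borel_measurable_restrict_space_iff) auto
  then show ?thesis by simp
qed

lemma
  fixes G :: "real \<Rightarrow> real"
  assumes "G \<in> borel_measurable borel"
  shows integral_delta_borel: "integral\<^sup>L (delta_borel c) G = (\<integral>s. indicator {0..<c} s * G (flr s) \<partial>lborel)"
    and integrable_delta_borel_iff:
      "integrable (delta_borel c) G \<longleftrightarrow> integrable lborel (\<lambda>s. indicator {0..<c} s * G (flr s))"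
proof -
  have "integral\<^sup>L (delta_borel c) G = integral\<^sup>L (restrict_space lborel {0..<c}) (\<lambda>x. G (flr x))"
    unfolding delta_borel_def using assms by (subst integral_distr[OF ts_floor_measurable]) auto
  also have "\<dots> = (\<integral>s. indicator {0..<c} s * G (flr s) \<partial>lborel)"
    by (subst integral_restrict_space) auto
  finally show "integral\<^sup>L (delta_borel c) G = (\<integral>s. indicator {0..<c} s * G (flr s) \<partial>lborel)" .
  have "integrable (delta_borel c) G \<longleftrightarrow> integrable (restrict_space lborel {0..<c}) (\<lambda>x. G (flr x))"
    unfolding delta_borel_def using assms by (subst integrable_distr_eq[OF ts_floor_measurable]) auto
  also have "\<dots> \<longleftrightarrow> integrable lborel (\<lambda>s. indicator {0..<c} s * G (flr s))"
    by (subst integrable_restrict_space) auto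
  finally show "integrable (delta_borel c) G \<longleftrightarrow> integrable lborel (\<lambda>s. indicator {0..<c} s * G (flr s))" .
qed

lemma
  fixes f G :: "real \<Rightarrow> real"
  assumes G: "G \<in> borel_measurable borel" and ae: "AE x in delta_borel c. f x = G x"
  shows delta_int_eq_lebesgue: "delta_int TS 0 c f = (\<integral>s. indicator {0..<c} s * G (flr s) \<partial>lborel)"
    and integrable_delta_iff_lebesgue:
      "integrable (delta_measure TS 0 c) f \<longleftrightarrow> integrable lborel (\<lambda>s. indicator {0..<c} s * G (flr s))"
proof -
  have Gm: "G \<in> borel_measurable (delta_borel c)" using G by simp
  have fm: "f \<in> borel_measurable (completion (delta_borel c))"
    by (rule borel_measurable_completion_AE_eq[OF Gm ae])
  have Gmc: "G \<in> borel_measurable (completion (delta_borel c))" using Gm by (rule measurable_completion)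
  have aec: "AE x in completion (delta_borel c). f x = G x" using AE_completion[OF ae] .
  have "delta_int TS 0 c f = integral\<^sup>L (completion (delta_borel c)) G"
    unfolding delta_int_def delta_measure_eq_completion by (rule integral_cong_AE[OF fm Gmc aec])
  also have "\<dots> = integral\<^sup>L (delta_borel c) G" using Gm by (rule integral_completion)
  finally show "delta_int TS 0 c f = (\<integral>s. indicator {0..<c} s * G (flr s) \<partial>lborel)"
    using integral_delta_borel[OF G] by simp
  have "integrable (delta_measure TS 0 c) f \<longleftrightarrow> integrable (completion (delta_borel c)) G"
    unfolding delta_measure_eq_completion by (rule integrable_cong_AE[OF fm Gmc aec])
  also have "\<dots> \<longleftrightarrow> integrable (delta_borel c) G" using Gm by (simp add: integrable_completion)
  finally show "integrable (delta_measure TS 0 c) f \<longleftrightarrow> integrable lborel (\<lambda>s. indicator {0..<c} s * G (flr s))"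
    using integrable_delta_borel_iff[OF G] by simp
qed

lemma delta_measurable_borel_version:
  fixes f :: "real \<Rightarrow> real"
  assumes "f \<in> borel_measurable (delta_measure TS 0 c)"
  obtains G where "G \<in> borel_measurable borel" "AE x in delta_borel c. f x = G x"
  using completion_ex_borel_measurable_real[of f "delta_borel c"] assms
  unfolding delta_measure_eq_completion by auto

lemma integrable_initial_segment:
  fixes G :: "real \<Rightarrow> real"
  assumes G: "G \<in> borel_measurable borel" and c: "c \<le> T"
    and int: "integrable lborel (\<lambda>s. indicator {0..<T} s * G (flr s))"
  shows "integrable lborel (\<lambda>s. indicator {0..<c} s * G (flr s))"
proof (rule Bochner_Integration.integrable_bound[OF int borel_measurable_indicator_ts_floor[OF G]])
  show "AE x in lborel. norm (indicator {0..<c} x * G (flr x)) \<le> norm (indicator {0..<T} x * G (flr x))"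
    using c by (intro AE_I2) (auto simp: indicator_def)
qed

subsection \<open>Primitives determine their \<open>\<Delta>\<close>-derivatives\<close>

lemma AE_zero_if_initial_integrals_vanish:
  fixes G :: "real \<Rightarrow> real"
  assumes G: "G \<in> borel_measurable borel"
    and int: "integrable lborel (\<lambda>s. indicator {0..<T} s * G (flr s))"
    and vanish: "\<And>c. c \<in> TS \<Longrightarrow> 0 \<le> c \<Longrightarrow> c \<le> T \<Longrightarrow> (\<integral>s. indicator {0..<c} s * G (flr s) \<partial>lborel) = 0"
  shows "AE x in delta_borel T. G x = 0"
proof (rule AE_zero_if_ray_integrals_vanish[OF finite_measure_delta_borel])
  show "integrable (delta_borel T) G" using integrable_delta_borel_iff[OF G] int by simp
  have vanish': "(\<integral>s. indicator {0..<c} s * G (flr s) \<partial>lborel) = 0" if "c \<in> TS" "c \<le> T" for c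
  proof (cases "0 \<le> c")
    case False
    then have "\<And>s. indicator {0..<c} s = (0::real)" by (auto simp: indicator_def)
    then show ?thesis by simp
  qed (use vanish that in auto)
  fix x :: real
  define c where "c = (if x < T then \<sigma> x else T)"
  have c: "c \<in> TS" "c \<le> T" using sigma_in_TS sigma_le_T T_in_TS by (auto simp: c_def)
  have Gx: "(\<lambda>y. indicator {x<..} y * G y) \<in> borel_measurable borel" using G by measurable
  text \<open>Up to the null set \<open>{c}\<close>, \<open>flr s > x\<close> means \<open>s \<ge> c\<close>.\<close>
  have "(\<integral>y. indicator {x<..} y * G y \<partial>delta_borel T)
      = (\<integral>s. indicator {0..<T} s * (indicator {x<..} (flr s) * G (flr s)) \<partial>lborel)"
    by (rule integral_delta_borel[OF Gx])
  also have "\<dots> = (\<integral>s. indicator {0..<T} s * G (flr s) - indicator {0..<c} s * G (flr s) \<partial>lborel)"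
  proof (rule integral_cong_AE)
    show "(\<lambda>s. indicator {0..<T} s * (indicator {x<..} (flr s) * G (flr s))) \<in> borel_measurable lborel"
      using borel_measurable_indicator_ts_floor[OF Gx] by simp
    show "(\<lambda>s. indicator {0..<T} s * G (flr s) - indicator {0..<c} s * G (flr s)) \<in> borel_measurable lborel"
      using borel_measurable_indicator_ts_floor[OF G] by measurable
    show "AE s in lborel. indicator {0..<T} s * (indicator {x<..} (flr s) * G (flr s)) =
        indicator {0..<T} s * G (flr s) - indicator {0..<c} s * G (flr s)"
      using AE_lborel_singleton[of c]
    proof eventually_elim
      case (elim s)
      show ?case
      proof (cases "0 \<le> s \<and> s < T")
        case True
        have "x < flr s \<longleftrightarrow> c \<le> s"
        proof (cases "x < T")
          case True
          then show ?thesis using less_ts_floor_iff[of x s] \<open>0 \<le> s \<and> s < T\<close> elim by (simp add: c_def)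
        next
          case False
          then show ?thesis using ts_floor_le[of s] True by (simp add: c_def)
        qed
        then show ?thesis using True by (auto simp: indicator_def)
      qed (use c in \<open>auto simp: indicator_def\<close>)
    qed
  qed
  also have "\<dots> = (\<integral>s. indicator {0..<T} s * G (flr s) \<partial>lborel) - (\<integral>s. indicator {0..<c} s * G (flr s) \<partial>lborel)"
    by (rule Bochner_Integration.integral_diff[OF int integrable_initial_segment[OF G c(2) int]])
  also have "\<dots> = 0" using vanish'[OF T_in_TS order.refl] vanish'[OF c] by simp
  finally show "(\<integral>y. indicator {x<..} y * G y \<partial>delta_borel T) = 0" .
qed (simp)

lemma finite_measure_delta_measure: "finite_measure \<mu>"
proof -
  interpret finite_measure "delta_borel T" by (rule finite_measure_delta_borel)
  show ?thesis unfolding delta_measure_eq_completion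
    by (rule finite_measureI) simp
qed

lemma measure_delta_measure_space: "measure \<mu> (space \<mu>) = T"
  using T_pos by (simp add: delta_measure_eq_completion measure_def emeasure_delta_borel)

lemma AE_delta_measure_in_TS: "AE x in \<mu>. x \<in> TS \<and> 0 \<le> x \<and> x < T"
  unfolding delta_measure_eq_completion by (rule AE_completion[OF AE_delta_borel_in_TS]) simp

lemma delta_deriv_lebesgue_rep:
  assumes "is_delta_deriv TS T u g"
  obtains G where "G \<in> borel_measurable borel" "AE x in delta_borel T. g x = G x"
    "integrable lborel (\<lambda>s. indicator {0..<T} s * G (flr s))"
    "integrable lborel (\<lambda>s. indicator {0..<T} s * (G (flr s))\<^sup>2)"
    "delta_int TS 0 T (\<lambda>t. (g t)\<^sup>2) = (\<integral>s. indicator {0..<T} s * (G (flr s))\<^sup>2 \<partial>lborel)"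
    "\<And>c. c \<in> TS \<Longrightarrow> 0 \<le> c \<Longrightarrow> c \<le> T \<Longrightarrow> u c = u 0 + (\<integral>s. indicator {0..<c} s * G (flr s) \<partial>lborel)"
proof -
  have L2: "L2_delta TS 0 T g" and prim: "\<And>t. t \<in> TS \<inter> {0..T} \<Longrightarrow> u t = u 0 + delta_int TS 0 t g"
    using assms by (auto simp: is_delta_deriv_def)
  have gm: "g \<in> borel_measurable \<mu>" and g2: "integrable \<mu> (\<lambda>t. (g t)\<^sup>2)"
    using L2 by (auto simp: L2_delta_def)
  obtain G where G: "G \<in> borel_measurable borel" and ae: "AE x in delta_borel T. g x = G x"
    using delta_measurable_borel_version[OF gm] by blast
  have "integrable \<mu> g"
    using finite_measure.square_integrable_imp_integrable[OF finite_measure_delta_measure gm g2] .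
  then have i1: "integrable lborel (\<lambda>s. indicator {0..<T} s * G (flr s))"
    using integrable_delta_iff_lebesgue[OF G ae] by simp
  have G2: "(\<lambda>x. (G x)\<^sup>2) \<in> borel_measurable borel" using G by measurable
  have ae2: "AE x in delta_borel T. (g x)\<^sup>2 = (G x)\<^sup>2" using ae by eventually_elim simp
  have i2: "integrable lborel (\<lambda>s. indicator {0..<T} s * (G (flr s))\<^sup>2)"
    using integrable_delta_iff_lebesgue[OF G2 ae2] g2 by simp
  have "u c = u 0 + (\<integral>s. indicator {0..<c} s * G (flr s) \<partial>lborel)" if c: "c \<in> TS" "0 \<le> c" "c \<le> T" for c
    using prim[of c] c delta_int_eq_lebesgue[OF G AE_delta_borel_mono[OF c(3) ae]] by simp
  from that[OF G ae i1 i2 delta_int_eq_lebesgue[OF G2 ae2] this] show ?thesis .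
qed

lemma integrable_delta_deriv_initial:
  assumes "is_delta_deriv TS T u g" "c \<le> T"
  shows "integrable (delta_measure TS 0 c) g"
proof -
  obtain G where G: "G \<in> borel_measurable borel" "AE x in delta_borel T. g x = G x"
     "integrable lborel (\<lambda>s. indicator {0..<T} s * G (flr s))"
    by (rule delta_deriv_lebesgue_rep[OF assms(1)]) blast
  show ?thesis
    using integrable_delta_iff_lebesgue[OF G(1) AE_delta_borel_mono[OF assms(2) G(2)]]
      integrable_initial_segment[OF G(1) assms(2) G(3)] by simp
qed

lemma delta_deriv_unique_AE:
  assumes "is_delta_deriv TS T u g" "is_delta_deriv TS T u g'"
  shows "AE x in delta_borel T. g x = g' x"
proof -
  obtain G where G: "G \<in> borel_measurable borel" "AE x in delta_borel T. g x = G x"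
     "integrable lborel (\<lambda>s. indicator {0..<T} s * G (flr s))"
     "\<And>c. c \<in> TS \<Longrightarrow> 0 \<le> c \<Longrightarrow> c \<le> T \<Longrightarrow> u c = u 0 + (\<integral>s. indicator {0..<c} s * G (flr s) \<partial>lborel)"
    by (rule delta_deriv_lebesgue_rep[OF assms(1)]) blast
  obtain G' where G': "G' \<in> borel_measurable borel" "AE x in delta_borel T. g' x = G' x"
     "integrable lborel (\<lambda>s. indicator {0..<T} s * G' (flr s))"
     "\<And>c. c \<in> TS \<Longrightarrow> 0 \<le> c \<Longrightarrow> c \<le> T \<Longrightarrow> u c = u 0 + (\<integral>s. indicator {0..<c} s * G' (flr s) \<partial>lborel)"
    by (rule delta_deriv_lebesgue_rep[OF assms(2)]) blast
  have split: "(\<lambda>s. indicator {0..<c} s * (G (flr s) - G' (flr s)))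
      = (\<lambda>s. indicator {0..<c} s * G (flr s) - indicator {0..<c} s * G' (flr s))" for c :: real
    by (auto simp: algebra_simps)
  have "AE x in delta_borel T. G x - G' x = 0"
  proof (rule AE_zero_if_initial_integrals_vanish)
    show "(\<lambda>x. G x - G' x) \<in> borel_measurable borel" using G(1) G'(1) by measurable
    show "integrable lborel (\<lambda>s. indicator {0..<T} s * (G (flr s) - G' (flr s)))"
      unfolding split using G(3) G'(3) by simp
    fix c assume c: "c \<in> TS" "0 \<le> c" "c \<le> T"
    show "(\<integral>s. indicator {0..<c} s * (G (flr s) - G' (flr s)) \<partial>lborel) = 0"
      unfolding split using G(4)[OF c] G'(4)[OF c]
        integrable_initial_segment[OF G(1) c(3) G(3)] integrable_initial_segment[OF G'(1) c(3) G'(3)]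
      by simp
  qed
  then show ?thesis using G(2) G'(2) by eventually_elim simp
qed

subsection \<open>The space \<open>H\<^sup>1\<^sub>0\<close>\<close>

lemma AE_delta_measure_if_AE_delta_borel: "AE x in delta_borel T. P x \<Longrightarrow> AE x in \<mu>. P x"
  unfolding delta_measure_eq_completion by (rule AE_completion)

lemma is_delta_deriv_lincomb:
  assumes "is_delta_deriv TS T u g" "is_delta_deriv TS T v k"
  shows "is_delta_deriv TS T (\<lambda>t. a * u t + b * v t) (\<lambda>t. a * g t + b * k t)"
proof -
  have L: "L2_delta TS 0 T g" "L2_delta TS 0 T k" using assms by (auto simp: is_delta_deriv_def)
  have [measurable]: "g \<in> borel_measurable \<mu>" "k \<in> borel_measurable \<mu>" using L by (auto simp: L2_delta_def)
  have sq: "integrable \<mu> (\<lambda>t. (g t)\<^sup>2)" "integrable \<mu> (\<lambda>t. (k t)\<^sup>2)" using L by (auto simp: L2_delta_def)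
  have "integrable \<mu> (\<lambda>t. (a * g t + b * k t)\<^sup>2)"
  proof (rule Bochner_Integration.integrable_bound[of _ "\<lambda>t. 2 * a\<^sup>2 * (g t)\<^sup>2 + 2 * b\<^sup>2 * (k t)\<^sup>2"])
    show "integrable \<mu> (\<lambda>t. 2 * a\<^sup>2 * (g t)\<^sup>2 + 2 * b\<^sup>2 * (k t)\<^sup>2)" using sq by simp
    show "AE x in \<mu>. norm ((a * g x + b * k x)\<^sup>2) \<le> norm (2 * a\<^sup>2 * (g x)\<^sup>2 + 2 * b\<^sup>2 * (k x)\<^sup>2)"
    proof (intro AE_I2)
      fix x
      have "0 \<le> (a * g x - b * k x)\<^sup>2" by simp
      then have "(a * g x + b * k x)\<^sup>2 \<le> 2 * a\<^sup>2 * (g x)\<^sup>2 + 2 * b\<^sup>2 * (k x)\<^sup>2"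
        by (simp add: power2_eq_square algebra_simps)
      then show "norm ((a * g x + b * k x)\<^sup>2) \<le> norm (2 * a\<^sup>2 * (g x)\<^sup>2 + 2 * b\<^sup>2 * (k x)\<^sup>2)"
        by simp
    qed
  qed measurable
  moreover have "(\<lambda>t. a * g t + b * k t) \<in> borel_measurable \<mu>" by measurable
  ultimately have "L2_delta TS 0 T (\<lambda>t. a * g t + b * k t)" by (simp add: L2_delta_def)
  moreover have "a * u t + b * v t = (a * u 0 + b * v 0) + delta_int TS 0 t (\<lambda>t. a * g t + b * k t)"
    if t: "t \<in> TS \<inter> {0..T}" for t
  proof -
    have "integrable (delta_measure TS 0 t) g" "integrable (delta_measure TS 0 t) k"
      using integrable_delta_deriv_initial[OF assms(1)] integrable_delta_deriv_initial[OF assms(2)] t by auto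
    then have "delta_int TS 0 t (\<lambda>t. a * g t + b * k t) = a * delta_int TS 0 t g + b * delta_int TS 0 t k"
      unfolding delta_int_def by simp
    moreover have "u t = u 0 + delta_int TS 0 t g" "v t = v 0 + delta_int TS 0 t k"
      using assms t by (auto simp: is_delta_deriv_def)
    ultimately show ?thesis by (simp add: algebra_simps)
  qed
  ultimately show ?thesis by (simp add: is_delta_deriv_def)
qed

lemma is_delta_deriv_dderiv: "u \<in> H10 TS T \<Longrightarrow> is_delta_deriv TS T u (dderiv TS T u)"
  unfolding H10_def dderiv_def by (auto intro: someI[where P="is_delta_deriv TS T u"])

lemma
  assumes "u \<in> H10 TS T" "v \<in> H10 TS T"
  shows H10_lincomb: "(\<lambda>t. a * u t + b * v t) \<in> H10 TS T"
    and dderiv_lincomb_AE: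
      "AE x in \<mu>. dderiv TS T (\<lambda>t. a * u t + b * v t) x = a * dderiv TS T u x + b * dderiv TS T v x"
proof -
  have d: "is_delta_deriv TS T (\<lambda>t. a * u t + b * v t) (\<lambda>t. a * dderiv TS T u t + b * dderiv TS T v t)"
    by (rule is_delta_deriv_lincomb[OF is_delta_deriv_dderiv[OF assms(1)] is_delta_deriv_dderiv[OF assms(2)]])
  then show w: "(\<lambda>t. a * u t + b * v t) \<in> H10 TS T" using assms by (auto simp: H10_def)
  show "AE x in \<mu>. dderiv TS T (\<lambda>t. a * u t + b * v t) x = a * dderiv TS T u x + b * dderiv TS T v x"
    by (rule AE_delta_measure_if_AE_delta_borel[OF delta_deriv_unique_AE[OF is_delta_deriv_dderiv[OF w] d]])
qed

lemma
  assumes "u \<in> H10 TS T" "v \<in> H10 TS T"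
  shows H10_diff: "(\<lambda>t. v t - u t) \<in> H10 TS T"
    and dderiv_diff_AE: "AE x in \<mu>. dderiv TS T v x = dderiv TS T u x + dderiv TS T (\<lambda>t. v t - u t) x"
proof -
  have eq: "(\<lambda>t. v t - u t) = (\<lambda>t. 1 * v t + (- 1) * u t)" by simp
  show "(\<lambda>t. v t - u t) \<in> H10 TS T" unfolding eq by (rule H10_lincomb[OF assms(2,1)])
  show "AE x in \<mu>. dderiv TS T v x = dderiv TS T u x + dderiv TS T (\<lambda>t. v t - u t) x"
    using dderiv_lincomb_AE[OF assms(2,1), of 1 "-1"] unfolding eq[symmetric]
    by eventually_elim simp
qed

lemma H10_ray: "u \<in> H10 TS T \<Longrightarrow> v \<in> H10 TS T \<Longrightarrow> (\<lambda>t. u t + s * v t) \<in> H10 TS T"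
  using H10_lincomb[of u v 1 s] by simp

lemma dderiv_measurable: "u \<in> H10 TS T \<Longrightarrow> dderiv TS T u \<in> borel_measurable \<mu>"
  and dderiv_square_integrable: "u \<in> H10 TS T \<Longrightarrow> integrable \<mu> (\<lambda>t. (dderiv TS T u t)\<^sup>2)"
  using is_delta_deriv_dderiv[of u] by (auto simp: is_delta_deriv_def L2_delta_def)

lemma H_norm_nonneg: "0 \<le> nrm u"
  and H_norm_square: "(nrm u)\<^sup>2 = delta_int TS 0 T (\<lambda>t. (dderiv TS T u t)\<^sup>2)"
  using delta_int_square_nonneg[of TS 0 T "dderiv TS T u"] by (simp_all add: H_norm_def)

lemma H_norm_scale:
  assumes v: "v \<in> H10 TS T"
  shows "nrm (\<lambda>t. s * v t) = \<bar>s\<bar> * nrm v"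
proof -
  have sv: "(\<lambda>t. s * v t) \<in> H10 TS T" using H10_lincomb[OF v v, of s 0] by simp
  have "AE x in \<mu>. dderiv TS T (\<lambda>t. s * v t) x = s * dderiv TS T v x"
    using dderiv_lincomb_AE[OF v v, of s 0] by simp
  then have "delta_int TS 0 T (\<lambda>t. (dderiv TS T (\<lambda>t. s * v t) t)\<^sup>2) = integral\<^sup>L \<mu> (\<lambda>t. s\<^sup>2 * (dderiv TS T v t)\<^sup>2)"
    unfolding delta_int_def using dderiv_measurable[OF sv] dderiv_measurable[OF v]
    by (intro integral_cong_AE) (auto simp: power_mult_distrib elim!: eventually_mono)
  also have "\<dots> = s\<^sup>2 * delta_int TS 0 T (\<lambda>t. (dderiv TS T v t)\<^sup>2)" by (simp add: delta_int_def)
  finally show ?thesis by (simp add: H_norm_def real_sqrt_mult)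
qed

lemma abs_H10_le:
  assumes u: "u \<in> H10 TS T" and c: "c \<in> TS" "0 \<le> c" "c \<le> T"
  shows "\<bar>u c\<bar> \<le> sqrt T * nrm u"
proof -
  obtain G where G: "G \<in> borel_measurable borel"
     "integrable lborel (\<lambda>s. indicator {0..<T} s * (G (flr s))\<^sup>2)"
     "delta_int TS 0 T (\<lambda>t. (dderiv TS T u t)\<^sup>2) = (\<integral>s. indicator {0..<T} s * (G (flr s))\<^sup>2 \<partial>lborel)"
     "\<And>c. c \<in> TS \<Longrightarrow> 0 \<le> c \<Longrightarrow> c \<le> T \<Longrightarrow> u c = u 0 + (\<integral>s. indicator {0..<c} s * G (flr s) \<partial>lborel)"
    by (rule delta_deriv_lebesgue_rep[OF is_delta_deriv_dderiv[OF u]]) blast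
  define g where "g s = indicator {0..<T} s * G (flr s)" for s
  have [measurable]: "g \<in> borel_measurable lborel"
    unfolding g_def[abs_def] by (rule borel_measurable_indicator_ts_floor[OF G(1)])
  have g2: "(\<lambda>s. (g s)\<^sup>2) = (\<lambda>s. indicator {0..<T} s * (G (flr s))\<^sup>2)"
    by (auto simp: g_def indicator_def)
  have ind2: "(\<lambda>s. (indicator {0..<c} s)\<^sup>2) = (indicator {0..<c} :: real \<Rightarrow> real)"
    by (auto simp: indicator_def)
  have "u c = (\<integral>s. indicator {0..<c} s * g s \<partial>lborel)"
    using G(4)[OF c] u c(3) by (auto simp: H10_def g_def indicator_def intro!: Bochner_Integration.integral_cong)
  also have "\<bar>\<dots>\<bar> \<le> sqrt (\<integral>s. (indicator {0..<c} s)\<^sup>2 \<partial>lborel) * sqrt (\<integral>s. (g s)\<^sup>2 \<partial>lborel)"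
  proof (rule Cauchy_Schwarz_integral)
    show "integrable lborel (\<lambda>s. (indicator {0..<c} s :: real)\<^sup>2)"
      unfolding ind2 by (rule integrable_real_indicator) (use c in auto)
  qed (use G(2) in \<open>simp_all add: g2\<close>)
  also have "\<dots> \<le> sqrt T * nrm u"
  proof (intro mult_mono)
    show "sqrt (\<integral>s. (g s)\<^sup>2 \<partial>lborel) \<le> nrm u"
      using G(3) H_norm_square[of u] H_norm_nonneg[of u] by (simp add: g2 real_sqrt_unique)
  qed (use c in \<open>simp_all add: ind2\<close>)
  finally show ?thesis .
qed

lemma borel_measurable_comp_sigma:
  assumes u: "u \<in> H10 TS T"
  shows "(\<lambda>t. u (\<sigma> t)) \<in> borel_measurable \<mu>"
proof -
  obtain G where G: "G \<in> borel_measurable borel"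
     "\<And>c. c \<in> TS \<Longrightarrow> 0 \<le> c \<Longrightarrow> c \<le> T \<Longrightarrow> u c = u 0 + (\<integral>s. indicator {0..<c} s * G (flr s) \<partial>lborel)"
    by (rule delta_deriv_lebesgue_rep[OF is_delta_deriv_dderiv[OF u]]) blast
  define g where "g s = indicator {0..<T} s * G (flr s)" for s
  have [measurable]: "g \<in> borel_measurable borel"
    using borel_measurable_indicator_ts_floor[OF G(1), of T] by (simp add: g_def[abs_def])
  define V where "V y = (\<integral>s. (if s < y then 1 else 0) * g s \<partial>lborel)" for y
  have "(\<lambda>(y, s). (if s < y then 1 else 0) * g s) \<in> borel_measurable (borel \<Otimes>\<^sub>M lborel)"
    by measurable
  then have V: "V \<in> borel_measurable borel"
    unfolding V_def
    by (rule lborel.borel_measurable_lebesgue_integral[where f="\<lambda>y s. (if s < y then 1 else 0) * g s", simplified])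
  have "AE x in delta_borel T. u (\<sigma> x) = V (\<sigma> x)"
    using AE_delta_borel_in_TS[OF order.refl]
  proof eventually_elim
    case (elim x)
    then have c: "\<sigma> x \<in> TS" "0 \<le> \<sigma> x" "\<sigma> x \<le> T" using sigma_in_TS sigma_ge sigma_le_T by fastforce+
    then show ?case using G(2)[OF c] u unfolding V_def g_def H10_def
      by (auto simp: indicator_def intro!: Bochner_Integration.integral_cong)
  qed
  moreover have "(\<lambda>t. V (\<sigma> t)) \<in> borel_measurable (delta_borel T)"
    using measurable_compose[OF borel_measurable_sigma V] by simp
  ultimately show ?thesis
    unfolding delta_measure_eq_completion by (intro borel_measurable_completion_AE_eq) auto
qed

lemma AE_abs_comp_sigma_le: "u \<in> H10 TS T \<Longrightarrow> AE t in \<mu>. \<bar>u (\<sigma> t)\<bar> \<le> sqrt T * nrm u"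
  using AE_delta_measure_in_TS
  by eventually_elim (intro abs_H10_le, auto intro: sigma_in_TS sigma_le_T order_trans[OF _ sigma_ge])

lemma
  assumes u: "u \<in> H10 TS T"
  shows square_integrable_comp_sigma: "integrable \<mu> (\<lambda>t. (u (\<sigma> t))\<^sup>2)"
    and integral_comp_sigma_square_le: "delta_int TS 0 T (\<lambda>t. (u (\<sigma> t))\<^sup>2) \<le> (T * nrm u)\<^sup>2"
proof -
  interpret finite_measure \<mu> by (rule finite_measure_delta_measure)
  have [measurable]: "(\<lambda>t. u (\<sigma> t)) \<in> borel_measurable \<mu>" by (rule borel_measurable_comp_sigma[OF u])
  have bound: "AE t in \<mu>. (u (\<sigma> t))\<^sup>2 \<le> T * (nrm u)\<^sup>2"
    using AE_abs_comp_sigma_le[OF u]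
  proof eventually_elim
    case (elim t)
    then have "\<bar>u (\<sigma> t)\<bar>\<^sup>2 \<le> (sqrt T * nrm u)\<^sup>2" by (rule power_mono) simp
    then show ?case using T_pos by (simp add: power_mult_distrib)
  qed
  show int: "integrable \<mu> (\<lambda>t. (u (\<sigma> t))\<^sup>2)"
    by (rule integrable_const_bound[where B="T * (nrm u)\<^sup>2"]) (use bound in auto)
  have "delta_int TS 0 T (\<lambda>t. (u (\<sigma> t))\<^sup>2) \<le> integral\<^sup>L \<mu> (\<lambda>t. T * (nrm u)\<^sup>2)"
    unfolding delta_int_def by (rule integral_mono_AE[OF int _ bound]) simp
  also have "\<dots> = (T * nrm u)\<^sup>2"
    using measure_delta_measure_space by (simp add: power2_eq_square)
  finally show "delta_int TS 0 T (\<lambda>t. (u (\<sigma> t))\<^sup>2) \<le> (T * nrm u)\<^sup>2" .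
qed

lemma sqrt_integral_comp_sigma_square_le:
  "u \<in> H10 TS T \<Longrightarrow> sqrt (delta_int TS 0 T (\<lambda>t. (u (\<sigma> t))\<^sup>2)) \<le> T * nrm u"
  using real_sqrt_le_mono[OF integral_comp_sigma_square_le, of u] T_pos H_norm_nonneg[of u] by simp

end

subsection \<open>The energy functional\<close>

locale impulsive_functional = delta_interval +
  fixes lam :: real and h :: "real \<Rightarrow> real" and p :: nat and tt d :: "nat \<Rightarrow> real"
  assumes h_L2: "L2_delta TS 0 T h"
    and impulse_points: "\<And>j. j \<in> {1..p} \<Longrightarrow> tt j \<in> TS \<and> 0 \<le> tt j \<and> tt j \<le> T"
begin

definition energy :: "(real \<Rightarrow> real) \<Rightarrow> real" where
  "energy v = 1/2 * delta_int TS 0 T (\<lambda>t. (dderiv TS T v t)\<^sup>2)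
        + lam/2 * delta_int TS 0 T (\<lambda>t. (v (\<sigma> t))\<^sup>2)
        - delta_int TS 0 T (\<lambda>t. h t * v (\<sigma> t))
        + (\<Sum>j=1..p. d j * v (tt j))"

definition energy_deriv :: "(real \<Rightarrow> real) \<Rightarrow> (real \<Rightarrow> real) \<Rightarrow> real" where
  "energy_deriv u v = delta_int TS 0 T (\<lambda>t. dderiv TS T u t * dderiv TS T v t)
        + lam * delta_int TS 0 T (\<lambda>t. u (\<sigma> t) * v (\<sigma> t))
        - delta_int TS 0 T (\<lambda>t. h t * v (\<sigma> t))
        + (\<Sum>j=1..p. d j * v (tt j))"

lemma h_measurable: "h \<in> borel_measurable \<mu>" and h_square_integrable: "integrable \<mu> (\<lambda>t. (h t)\<^sup>2)"
  using h_L2 by (simp_all add: L2_delta_def)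

lemma
  assumes u: "u \<in> H10 TS T" and v: "v \<in> H10 TS T"
  shows integrable_dderiv_mult: "integrable \<mu> (\<lambda>t. dderiv TS T u t * dderiv TS T v t)"
    and integrable_comp_sigma_mult: "integrable \<mu> (\<lambda>t. u (\<sigma> t) * v (\<sigma> t))"
   by (rule integrable_mult_of_square_integrable[OF dderiv_measurable[OF u] dderiv_measurable[OF v]
          dderiv_square_integrable[OF u] dderiv_square_integrable[OF v]],
       rule integrable_mult_of_square_integrable[OF borel_measurable_comp_sigma[OF u]
          borel_measurable_comp_sigma[OF v] square_integrable_comp_sigma[OF u] square_integrable_comp_sigma[OF v]])

lemma integrable_h_comp_sigma: "v \<in> H10 TS T \<Longrightarrow> integrable \<mu> (\<lambda>t. h t * v (\<sigma> t))"
  by (rule integrable_mult_of_square_integrable[OF h_measurable borel_measurable_comp_sigma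
        h_square_integrable square_integrable_comp_sigma])

lemma abs_integral_dderiv_mult_le:
  assumes u: "u \<in> H10 TS T" and v: "v \<in> H10 TS T"
  shows "\<bar>delta_int TS 0 T (\<lambda>t. dderiv TS T u t * dderiv TS T v t)\<bar> \<le> nrm u * nrm v"
  unfolding delta_int_def H_norm_def
  using Cauchy_Schwarz_integral[OF dderiv_measurable[OF u] dderiv_measurable[OF v]
      dderiv_square_integrable[OF u] dderiv_square_integrable[OF v]] .

lemma abs_integral_comp_sigma_mult_le:
  assumes u: "u \<in> H10 TS T" and v: "v \<in> H10 TS T"
  shows "\<bar>delta_int TS 0 T (\<lambda>t. u (\<sigma> t) * v (\<sigma> t))\<bar> \<le> (T * nrm u) * (T * nrm v)"
proof -
  have "\<bar>delta_int TS 0 T (\<lambda>t. u (\<sigma> t) * v (\<sigma> t))\<bar>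
      \<le> sqrt (delta_int TS 0 T (\<lambda>t. (u (\<sigma> t))\<^sup>2)) * sqrt (delta_int TS 0 T (\<lambda>t. (v (\<sigma> t))\<^sup>2))"
    unfolding delta_int_def
    by (rule Cauchy_Schwarz_integral[OF borel_measurable_comp_sigma[OF u] borel_measurable_comp_sigma[OF v]
          square_integrable_comp_sigma[OF u] square_integrable_comp_sigma[OF v]])
  also have "\<dots> \<le> (T * nrm u) * (T * nrm v)"
    by (intro mult_mono sqrt_integral_comp_sigma_square_le u v) (use T_pos H_norm_nonneg delta_int_square_nonneg in auto)
  finally show ?thesis .
qed

lemma abs_integral_h_comp_sigma_le:
  assumes v: "v \<in> H10 TS T"
  shows "\<bar>delta_int TS 0 T (\<lambda>t. h t * v (\<sigma> t))\<bar> \<le> sqrt (delta_int TS 0 T (\<lambda>t. (h t)\<^sup>2)) * (T * nrm v)"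
proof -
  have "\<bar>delta_int TS 0 T (\<lambda>t. h t * v (\<sigma> t))\<bar>
      \<le> sqrt (delta_int TS 0 T (\<lambda>t. (h t)\<^sup>2)) * sqrt (delta_int TS 0 T (\<lambda>t. (v (\<sigma> t))\<^sup>2))"
    unfolding delta_int_def
    by (rule Cauchy_Schwarz_integral[OF h_measurable borel_measurable_comp_sigma[OF v]
          h_square_integrable square_integrable_comp_sigma[OF v]])
  also have "\<dots> \<le> sqrt (delta_int TS 0 T (\<lambda>t. (h t)\<^sup>2)) * (T * nrm v)"
    by (intro mult_left_mono sqrt_integral_comp_sigma_square_le v) (simp add: delta_int_square_nonneg)
  finally show ?thesis .
qed

lemma abs_impulse_sum_le:
  assumes v: "v \<in> H10 TS T"
  shows "\<bar>\<Sum>j=1..p. d j * v (tt j)\<bar> \<le> (\<Sum>j=1..p. \<bar>d j\<bar>) * (sqrt T * nrm v)"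
proof -
  have "\<bar>\<Sum>j=1..p. d j * v (tt j)\<bar> \<le> (\<Sum>j=1..p. \<bar>d j\<bar> * \<bar>v (tt j)\<bar>)"
    using sum_abs[of "\<lambda>j. d j * v (tt j)"] by (simp add: abs_mult)
  also have "\<dots> \<le> (\<Sum>j=1..p. \<bar>d j\<bar> * (sqrt T * nrm v))"
    using abs_H10_le[OF v] impulse_points by (intro sum_mono mult_left_mono) auto
  finally show ?thesis by (simp add: sum_distrib_right)
qed

lemma energy_deriv_lincomb:
  assumes u: "u \<in> H10 TS T" and v: "v \<in> H10 TS T" and w: "w \<in> H10 TS T"
  shows "energy_deriv u (\<lambda>t. a * v t + b * w t) = a * energy_deriv u v + b * energy_deriv u w"
proof -
  let ?z = "\<lambda>t. a * v t + b * w t"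
  have "integral\<^sup>L \<mu> (\<lambda>t. dderiv TS T u t * dderiv TS T ?z t)
      = integral\<^sup>L \<mu> (\<lambda>t. a * (dderiv TS T u t * dderiv TS T v t) + b * (dderiv TS T u t * dderiv TS T w t))"
    using dderiv_lincomb_AE[OF v w, of a b] dderiv_measurable[OF H10_lincomb[OF v w]]
      dderiv_measurable[OF u] dderiv_measurable[OF v] dderiv_measurable[OF w]
    by (intro integral_cong_AE) (auto simp: algebra_simps elim!: eventually_mono)
  also have "\<dots> = a * integral\<^sup>L \<mu> (\<lambda>t. dderiv TS T u t * dderiv TS T v t)
      + b * integral\<^sup>L \<mu> (\<lambda>t. dderiv TS T u t * dderiv TS T w t)"
    using integrable_dderiv_mult[OF u v] integrable_dderiv_mult[OF u w] by simp
  finally have D: "integral\<^sup>L \<mu> (\<lambda>t. dderiv TS T u t * dderiv TS T ?z t)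
      = a * integral\<^sup>L \<mu> (\<lambda>t. dderiv TS T u t * dderiv TS T v t)
      + b * integral\<^sup>L \<mu> (\<lambda>t. dderiv TS T u t * dderiv TS T w t)" .
  have S: "integral\<^sup>L \<mu> (\<lambda>t. u (\<sigma> t) * ?z (\<sigma> t))
      = a * integral\<^sup>L \<mu> (\<lambda>t. u (\<sigma> t) * v (\<sigma> t)) + b * integral\<^sup>L \<mu> (\<lambda>t. u (\<sigma> t) * w (\<sigma> t))"
    using integrable_comp_sigma_mult[OF u v] integrable_comp_sigma_mult[OF u w]
    by (simp add: distrib_left mult.left_commute)
  have H: "integral\<^sup>L \<mu> (\<lambda>t. h t * ?z (\<sigma> t))
      = a * integral\<^sup>L \<mu> (\<lambda>t. h t * v (\<sigma> t)) + b * integral\<^sup>L \<mu> (\<lambda>t. h t * w (\<sigma> t))"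
    using integrable_h_comp_sigma[OF v] integrable_h_comp_sigma[OF w]
    by (simp add: distrib_left mult.left_commute)
  have I: "(\<Sum>j=1..p. d j * ?z (tt j)) = a * (\<Sum>j=1..p. d j * v (tt j)) + b * (\<Sum>j=1..p. d j * w (tt j))"
    by (simp add: sum.distrib sum_distrib_left algebra_simps)
  show ?thesis unfolding energy_deriv_def delta_int_def D S H I by (simp add: algebra_simps)
qed

lemma energy_deriv_bounded:
  assumes u: "u \<in> H10 TS T"
  shows "\<exists>C. \<forall>v\<in>H10 TS T. \<bar>energy_deriv u v\<bar> \<le> C * nrm v"
proof (intro exI ballI)
  fix v assume v: "v \<in> H10 TS T"
  have "\<bar>energy_deriv u v\<bar> \<le> \<bar>delta_int TS 0 T (\<lambda>t. dderiv TS T u t * dderiv TS T v t)\<bar>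
      + \<bar>lam\<bar> * \<bar>delta_int TS 0 T (\<lambda>t. u (\<sigma> t) * v (\<sigma> t))\<bar>
      + \<bar>delta_int TS 0 T (\<lambda>t. h t * v (\<sigma> t))\<bar> + \<bar>\<Sum>j=1..p. d j * v (tt j)\<bar>"
  proof -
    have tri: "\<bar>x1 + x2 - x3 + x4\<bar> \<le> \<bar>x1\<bar> + \<bar>x2\<bar> + \<bar>x3\<bar> + \<bar>x4\<bar>" for x1 x2 x3 x4 :: real
      by (simp add: abs_if)
    show ?thesis unfolding energy_deriv_def abs_mult[symmetric] by (rule tri)
  qed
  also have "\<dots> \<le> nrm u * nrm v + \<bar>lam\<bar> * ((T * nrm u) * (T * nrm v))
      + sqrt (delta_int TS 0 T (\<lambda>t. (h t)\<^sup>2)) * (T * nrm v) + (\<Sum>j=1..p. \<bar>d j\<bar>) * (sqrt T * nrm v)"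
    by (intro add_mono mult_left_mono abs_integral_dderiv_mult_le abs_integral_comp_sigma_mult_le
        abs_integral_h_comp_sigma_le abs_impulse_sum_le u v) simp
  also have "\<dots> = (nrm u + \<bar>lam\<bar> * T\<^sup>2 * nrm u + sqrt (delta_int TS 0 T (\<lambda>t. (h t)\<^sup>2)) * T
      + (\<Sum>j=1..p. \<bar>d j\<bar>) * sqrt T) * nrm v"
    by (simp add: algebra_simps power2_eq_square)
  finally show "\<bar>energy_deriv u v\<bar> \<le> (nrm u + \<bar>lam\<bar> * T\<^sup>2 * nrm u + sqrt (delta_int TS 0 T (\<lambda>t. (h t)\<^sup>2)) * T
      + (\<Sum>j=1..p. \<bar>d j\<bar>) * sqrt T) * nrm v" .
qed

lemma energy_remainder:
  assumes u: "u \<in> H10 TS T" and v: "v \<in> H10 TS T"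
  defines "w \<equiv> \<lambda>t. v t - u t"
  shows "energy v - energy u - energy_deriv u w = 1/2 * (nrm w)\<^sup>2 + lam/2 * delta_int TS 0 T (\<lambda>t. (w (\<sigma> t))\<^sup>2)"
proof -
  have w: "w \<in> H10 TS T" unfolding w_def by (rule H10_diff[OF u v])
  have D: "integral\<^sup>L \<mu> (\<lambda>t. (dderiv TS T v t)\<^sup>2) = integral\<^sup>L \<mu> (\<lambda>t. (dderiv TS T u t)\<^sup>2)
      + 2 * integral\<^sup>L \<mu> (\<lambda>t. dderiv TS T u t * dderiv TS T w t) + integral\<^sup>L \<mu> (\<lambda>t. (dderiv TS T w t)\<^sup>2)"
  proof -
    have "integral\<^sup>L \<mu> (\<lambda>t. (dderiv TS T v t)\<^sup>2) = integral\<^sup>L \<mu> (\<lambda>t. (dderiv TS T u t)\<^sup>2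
        + 2 * (dderiv TS T u t * dderiv TS T w t) + (dderiv TS T w t)\<^sup>2)"
      using dderiv_diff_AE[OF u v] dderiv_measurable[OF u] dderiv_measurable[OF v] dderiv_measurable[OF w]
      unfolding w_def
      by (intro integral_cong_AE) (auto simp: power2_eq_square algebra_simps elim!: eventually_mono)
    then show ?thesis
      using dderiv_square_integrable[OF u] dderiv_square_integrable[OF w] integrable_dderiv_mult[OF u w]
      by simp
  qed
  have v_eq: "\<And>t. v (\<sigma> t) = u (\<sigma> t) + w (\<sigma> t)" by (simp add: w_def)
  have S: "integral\<^sup>L \<mu> (\<lambda>t. (v (\<sigma> t))\<^sup>2) = integral\<^sup>L \<mu> (\<lambda>t. (u (\<sigma> t))\<^sup>2)
      + 2 * integral\<^sup>L \<mu> (\<lambda>t. u (\<sigma> t) * w (\<sigma> t)) + integral\<^sup>L \<mu> (\<lambda>t. (w (\<sigma> t))\<^sup>2)"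
    using square_integrable_comp_sigma[OF u] square_integrable_comp_sigma[OF w] integrable_comp_sigma_mult[OF u w]
    unfolding v_eq by (simp add: power2_eq_square algebra_simps)
  have H: "integral\<^sup>L \<mu> (\<lambda>t. h t * v (\<sigma> t))
      = integral\<^sup>L \<mu> (\<lambda>t. h t * u (\<sigma> t)) + integral\<^sup>L \<mu> (\<lambda>t. h t * w (\<sigma> t))"
    using integrable_h_comp_sigma[OF u] integrable_h_comp_sigma[OF w]
    unfolding v_eq by (simp add: distrib_left)
  have I: "(\<Sum>j=1..p. d j * v (tt j)) = (\<Sum>j=1..p. d j * u (tt j)) + (\<Sum>j=1..p. d j * w (tt j))"
    by (simp add: w_def sum.distrib[symmetric] algebra_simps)
  show ?thesis
    unfolding energy_def energy_deriv_def delta_int_def D S H I H_norm_square[of w]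
    by (simp add: algebra_simps)
qed

lemma frechet_diff_at_energy:
  assumes u: "u \<in> H10 TS T"
  shows "frechet_diff_at (H10 TS T) nrm energy u (energy_deriv u)"
  unfolding frechet_diff_at_def
proof (intro conjI allI impI)
  show "\<forall>v\<in>H10 TS T. \<forall>w\<in>H10 TS T. \<forall>a b.
      energy_deriv u (\<lambda>t. a * v t + b * w t) = a * energy_deriv u v + b * energy_deriv u w"
    using energy_deriv_lincomb[OF u] by blast
  show "\<exists>C. \<forall>v\<in>H10 TS T. \<bar>energy_deriv u v\<bar> \<le> C * nrm v" by (rule energy_deriv_bounded[OF u])
  fix \<epsilon> :: real assume \<epsilon>: "0 < \<epsilon>"
  define K where "K = 1/2 + \<bar>lam\<bar> / 2 * T\<^sup>2"
  have K: "0 < K" by (simp add: K_def add_pos_nonneg)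
  show "\<exists>\<delta>>0. \<forall>v\<in>H10 TS T. nrm (\<lambda>t. v t - u t) < \<delta> \<longrightarrow>
      \<bar>energy v - energy u - energy_deriv u (\<lambda>t. v t - u t)\<bar> \<le> \<epsilon> * nrm (\<lambda>t. v t - u t)"
  proof (intro exI[of _ "\<epsilon> / K"] conjI ballI impI)
    show "0 < \<epsilon> / K" using \<epsilon> K by simp
    fix v assume v: "v \<in> H10 TS T" and close: "nrm (\<lambda>t. v t - u t) < \<epsilon> / K"
    define w where "w = (\<lambda>t. v t - u t)"
    define I where "I = delta_int TS 0 T (\<lambda>t. (w (\<sigma> t))\<^sup>2)"
    have I: "0 \<le> I" "I \<le> (T * nrm w)\<^sup>2"
      unfolding I_def using delta_int_square_nonneg integral_comp_sigma_square_le[OF H10_diff[OF u v]]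
      by (auto simp: w_def)
    have "\<bar>energy v - energy u - energy_deriv u w\<bar> = \<bar>1/2 * (nrm w)\<^sup>2 + lam/2 * I\<bar>"
      using energy_remainder[OF u v] by (simp add: w_def I_def)
    also have "\<dots> \<le> 1/2 * (nrm w)\<^sup>2 + \<bar>lam\<bar>/2 * (T * nrm w)\<^sup>2"
      using I by (auto simp: abs_mult intro!: order_trans[OF abs_triangle_ineq] mult_left_mono)
    also have "\<dots> = K * nrm w * nrm w" by (simp add: K_def power2_eq_square algebra_simps)
    also have "\<dots> \<le> K * (\<epsilon> / K) * nrm w"
      using close K H_norm_nonneg[of w] unfolding w_def by (intro mult_right_mono mult_left_mono) auto
    also have "\<dots> = \<epsilon> * nrm w" using K by simp
    finally show "\<bar>energy v - energy u - energy_deriv u (\<lambda>t. v t - u t)\<bar> \<le> \<epsilon> * nrm (\<lambda>t. v t - u t)"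
      by (simp add: w_def)
  qed
qed

lemma energy_deriv_vanishes_at_critical_point:
  assumes crit: "critical_point (H10 TS T) nrm energy u" and v: "v \<in> H10 TS T"
  shows "energy_deriv u v = 0"
proof -
  obtain L where L: "frechet_diff_at (H10 TS T) nrm energy u L" "\<forall>v\<in>H10 TS T. L v = 0"
    and u: "u \<in> H10 TS T"
    using crit unfolding critical_point_def by blast
  have "energy_deriv u v = L v"
    by (rule frechet_diff_at_unique[OF frechet_diff_at_energy[OF u] L(1) H10_ray[OF u]
          H_norm_scale H_norm_nonneg v])
  then show ?thesis using L(2) v by simp
qed

end

theorem mainTheorem3:
  fixes TS :: "real set" and T lam :: real and h :: "real \<Rightarrow> real"
    and p :: nat and tt d :: "nat \<Rightarrow> real"
    and \<phi> :: "(real \<Rightarrow> real) \<Rightarrow> real"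
  assumes "time_scale TS" and "T > 0" and "0 \<in> TS" and "T \<in> TS"
    and "\<forall>j\<in>{1..p}. right_dense TS (tt j) \<and> 0 < tt j \<and> tt j < T"
    and "\<forall>i\<in>{1..p}. \<forall>j\<in>{1..p}. i < j \<longrightarrow> tt i < tt j"
    and "L2_delta TS 0 T h"
    and phi_def: "\<forall>v. \<phi> v =
        1/2 * delta_int TS 0 T (\<lambda>t. (dderiv TS T v t)\<^sup>2)
        + lam/2 * delta_int TS 0 T (\<lambda>t. (v (sigma_ts TS t))\<^sup>2)
        - delta_int TS 0 T (\<lambda>t. h t * v (sigma_ts TS t))
        + (\<Sum>j=1..p. d j * v (tt j))"
  shows "(\<forall>u\<in>H10 TS T. frechet_diff_at (H10 TS T) (H_norm TS T) \<phi> u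
            (\<lambda>v. delta_int TS 0 T (\<lambda>t. dderiv TS T u t * dderiv TS T v t)
                + lam * delta_int TS 0 T (\<lambda>t. u (sigma_ts TS t) * v (sigma_ts TS t))
                - delta_int TS 0 T (\<lambda>t. h t * v (sigma_ts TS t))
                + (\<Sum>j=1..p. d j * v (tt j))))
       \<and> (\<forall>u\<in>H10 TS T. critical_point (H10 TS T) (H_norm TS T) \<phi> u
            \<longrightarrow> weak_solution TS T lam h p tt d u)"
proof -
  text \<open>Only \<open>tt j \<in> TS \<inter> [0,T]\<close> is used: the ordering and right-density of the impulse points
    matter for the strong form of the problem, not for the weak one.\<close>
  interpret impulsive_functional TS T lam h p tt d
  proof unfold_locales
    show "tt j \<in> TS \<and> 0 \<le> tt j \<and> tt j \<le> T" if "j \<in> {1..p}" for j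
    proof -
      have "right_dense TS (tt j) \<and> 0 < tt j \<and> tt j < T" using assms(5) that by blast
      then show ?thesis by (simp add: right_dense_def)
    qed
  qed (use assms in \<open>auto simp: time_scale_def\<close>)
  have energy: "\<phi> = energy" by (rule ext) (simp add: phi_def energy_def)
  have deriv: "energy_deriv u = (\<lambda>v. delta_int TS 0 T (\<lambda>t. dderiv TS T u t * dderiv TS T v t)
                + lam * delta_int TS 0 T (\<lambda>t. u (sigma_ts TS t) * v (sigma_ts TS t))
                - delta_int TS 0 T (\<lambda>t. h t * v (sigma_ts TS t))
                + (\<Sum>j=1..p. d j * v (tt j)))" for u
    by (rule ext) (simp add: energy_deriv_def)
  show ?thesis
    unfolding energy deriv[symmetric] weak_solution_def
    using frechet_diff_at_energy energy_deriv_vanishes_at_critical_point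
    by (auto simp: energy_deriv_def critical_point_def algebra_simps)
qed

end
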